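(* Let $\beta\colon(Z,Z_0)\to(Z,Z_0)$ be an RTT map of Type 2 and $v_0$ a fixed vertex of $\beta$. Let $\beta_\pi\colon\pi_1(Z,v_0)\to\pi_1(Z,v_0)$, $[a]\mapsto[\beta\circ a]$, and let $(\beta_0)_\pi$ be its restriction to $\pi_1(Z_0',v_0)$, where $Z_0'$ is the component of $Z_0$ containing $v_0$. Then every attracting fixed word of $\beta_\pi$ is equivalent to an attracting fixed word of $(\beta_0)_\pi$.
   Context: A graph map sends vertices to vertices and each edge either locally injectively or to a point. An RTT map of Type 2: $Z$ is a connected finite graph, not a tree, with no vertices of valence 1; $\beta\colon Z\to Z$ is a $\pi_1$-injective graph map all of whose fixed points are vertices; $Z_0$ is a $\beta$-invariant proper subgraph containing all vertices of $Z$; and $\beta$ cyclically permutes the edges of $Z\setminus Z_0$. $\partial\pi_1(Z,v_0)$ is identified with the set of reduced infinite edge paths in $Z$ from $v_0$, and $\partial\pi_1(Z_0',v_0)\subset\partial\pi_1(Z,v_0)$. Attracting fixed words: with respect to a free basis, an infinite word $W$ with $\phi(W)=W$ (boundary extension $\phi(W)=\lim\phi(W_i)$, $W_i$ the length-$i$ prefix) is attracting if $|W\wedge\phi(W_i)|-i\to+\infty$, where $\wedge$ denotes longest common initial segment; fixed infinite words $W,W'$ are equivalent if $W'=UW$ with $U\in\mathrm{Fix}(\beta_\pi)$. *)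

theory Defs
  imports Main
begin

text \<open>Combinatorial finite graphs in the sense of Serre: vertex set V, oriented edge set E,
  source/target maps and a fixed-point-free orientation-reversing involution rv.\<close>

definition graph :: "'v set \<Rightarrow> 'e set \<Rightarrow> ('e \<Rightarrow> 'v) \<Rightarrow> ('e \<Rightarrow> 'v) \<Rightarrow> ('e \<Rightarrow> 'e) \<Rightarrow> bool" where
  "graph V E src tgt rv \<longleftrightarrow> finite V \<and> finite E \<and>
     (\<forall>e\<in>E. src e \<in> V \<and> tgt e \<in> V \<and> rv e \<in> E \<and> rv (rv e) = e \<and> rv e \<noteq> e \<and> src (rv e) = tgt e)"

fun epath :: "'e set \<Rightarrow> ('e \<Rightarrow> 'v) \<Rightarrow> ('e \<Rightarrow> 'v) \<Rightarrow> 'v \<Rightarrow> 'e list \<Rightarrow> 'v \<Rightarrow> bool" where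
  "epath E src tgt v [] w = (v = w)"
| "epath E src tgt v (e # p) w = (e \<in> E \<and> src e = v \<and> epath E src tgt (tgt e) p w)"

definition reduced :: "('e \<Rightarrow> 'e) \<Rightarrow> 'e list \<Rightarrow> bool" where
  "reduced rv p \<longleftrightarrow> (\<forall>i. Suc i < length p \<longrightarrow> p ! Suc i \<noteq> rv (p ! i))"

fun red :: "('e \<Rightarrow> 'e) \<Rightarrow> 'e list \<Rightarrow> 'e list" where
  "red rv [] = []"
| "red rv (e # p) = (case red rv p of [] \<Rightarrow> [e] | f # q \<Rightarrow> (if f = rv e then q else e # f # q))"

definition rev_path :: "('e \<Rightarrow> 'e) \<Rightarrow> 'e list \<Rightarrow> 'e list" where
  "rev_path rv p = rev (map rv p)"

definition connected_graph :: "'v set \<Rightarrow> 'e set \<Rightarrow> ('e \<Rightarrow> 'v) \<Rightarrow> ('e \<Rightarrow> 'v) \<Rightarrow> bool" where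
  "connected_graph V E src tgt \<longleftrightarrow> (\<forall>v\<in>V. \<forall>w\<in>V. \<exists>p. epath E src tgt v p w)"

definition is_tree :: "'v set \<Rightarrow> 'e set \<Rightarrow> ('e \<Rightarrow> 'v) \<Rightarrow> ('e \<Rightarrow> 'v) \<Rightarrow> ('e \<Rightarrow> 'e) \<Rightarrow> bool" where
  "is_tree V E src tgt rv \<longleftrightarrow> connected_graph V E src tgt \<and>
     \<not> (\<exists>v\<in>V. \<exists>p. p \<noteq> [] \<and> reduced rv p \<and> epath E src tgt v p v)"

definition valence :: "'e set \<Rightarrow> ('e \<Rightarrow> 'v) \<Rightarrow> 'v \<Rightarrow> nat" where
  "valence E src v = card {e \<in> E. src e = v}"

text \<open>A graph map: vertices to vertices, each edge to a reduced edge path (locally injective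
  image) or to a point (empty path); compatible with reversal.\<close>
definition graph_map :: "'v set \<Rightarrow> 'e set \<Rightarrow> ('e \<Rightarrow> 'v) \<Rightarrow> ('e \<Rightarrow> 'v) \<Rightarrow> ('e \<Rightarrow> 'e)
     \<Rightarrow> ('v \<Rightarrow> 'v) \<Rightarrow> ('e \<Rightarrow> 'e list) \<Rightarrow> bool" where
  "graph_map V E src tgt rv bV bE \<longleftrightarrow> (\<forall>v\<in>V. bV v \<in> V) \<and>
     (\<forall>e\<in>E. epath E src tgt (bV (src e)) (bE e) (bV (tgt e)) \<and> reduced rv (bE e) \<and>
             bE (rv e) = rev_path rv (bE e))"

definition bstar :: "('e \<Rightarrow> 'e list) \<Rightarrow> 'e list \<Rightarrow> 'e list" where
  "bstar bE p = concat (map bE p)"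

definition pi1 :: "'e set \<Rightarrow> ('e \<Rightarrow> 'v) \<Rightarrow> ('e \<Rightarrow> 'v) \<Rightarrow> ('e \<Rightarrow> 'e) \<Rightarrow> 'v \<Rightarrow> 'e list set" where
  "pi1 E src tgt rv v = {p. epath E src tgt v p v \<and> reduced rv p}"

definition pi1_injective :: "'v set \<Rightarrow> 'e set \<Rightarrow> ('e \<Rightarrow> 'v) \<Rightarrow> ('e \<Rightarrow> 'v) \<Rightarrow> ('e \<Rightarrow> 'e)
     \<Rightarrow> ('e \<Rightarrow> 'e list) \<Rightarrow> bool" where
  "pi1_injective V E src tgt rv bE \<longleftrightarrow>
     (\<forall>v\<in>V. inj_on (\<lambda>p. red rv (bstar bE p)) (pi1 E src tgt rv v))"

text \<open>All fixed points of (the piecewise-linear realization of) the graph map are vertices: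
  on an edge e with image path of length n, the j-th subinterval of length 1/n is mapped
  linearly onto the j-th edge of the image.  An interior fixed point occurs exactly when
  rv e occurs in the image, or e occurs at a position other than the first or last, or
  the image is just [e].\<close>
definition fixed_points_vertices :: "'e set \<Rightarrow> ('e \<Rightarrow> 'e) \<Rightarrow> ('e \<Rightarrow> 'e list) \<Rightarrow> bool" where
  "fixed_points_vertices E rv bE \<longleftrightarrow> (\<forall>e\<in>E. rv e \<notin> set (bE e) \<and>
     (\<forall>j < length (bE e). bE e ! j = e \<longrightarrow>
        2 \<le> length (bE e) \<and> (j = 0 \<or> j = length (bE e) - 1)))"

definition rtt_type2 :: "'v set \<Rightarrow> 'e set \<Rightarrow> ('e \<Rightarrow> 'v) \<Rightarrow> ('e \<Rightarrow> 'v) \<Rightarrow> ('e \<Rightarrow> 'e)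
     \<Rightarrow> 'e set \<Rightarrow> ('v \<Rightarrow> 'v) \<Rightarrow> ('e \<Rightarrow> 'e list) \<Rightarrow> bool" where
  "rtt_type2 V E src tgt rv E0 bV bE \<longleftrightarrow>
     graph V E src tgt rv \<and> connected_graph V E src tgt \<and> \<not> is_tree V E src tgt rv \<and>
     (\<forall>v\<in>V. valence E src v \<noteq> 1) \<and>
     graph_map V E src tgt rv bV bE \<and> pi1_injective V E src tgt rv bE \<and>
     fixed_points_vertices E rv bE \<and>
     \<comment> \<open>Z_0: proper, beta-invariant subgraph containing all vertices\<close>
     E0 \<subseteq> E \<and> E0 \<noteq> E \<and> (\<forall>e\<in>E0. rv e \<in> E0) \<and> (\<forall>e\<in>E0. set (bE e) \<subseteq> E0) \<and>
     \<comment> \<open>beta cyclically permutes the edges of Z minus Z_0\<close>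
     (\<forall>e\<in>E - E0. \<exists>f\<in>E - E0. bE e = [f]) \<and>
     (\<forall>e\<in>E - E0. \<forall>e'\<in>E - E0. \<exists>n. ((\<lambda>x. hd (bE x)) ^^ n) e \<in> {e', rv e'})"

text \<open>Reduced infinite edge paths from v (points of the boundary of pi_1).\<close>
definition inf_path :: "'e set \<Rightarrow> ('e \<Rightarrow> 'v) \<Rightarrow> ('e \<Rightarrow> 'v) \<Rightarrow> ('e \<Rightarrow> 'e) \<Rightarrow> 'v \<Rightarrow> (nat \<Rightarrow> 'e) \<Rightarrow> bool" where
  "inf_path E src tgt rv v W \<longleftrightarrow> (\<forall>n. W n \<in> E) \<and> src (W 0) = v \<and>
     (\<forall>n. tgt (W n) = src (W (Suc n))) \<and> (\<forall>n. W (Suc n) \<noteq> rv (W n))"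

definition prefix :: "nat \<Rightarrow> (nat \<Rightarrow> 'e) \<Rightarrow> 'e list" where
  "prefix n W = map W [0..<n]"

definition converges_to :: "(nat \<Rightarrow> 'e list) \<Rightarrow> (nat \<Rightarrow> 'e) \<Rightarrow> bool" where
  "converges_to ps X \<longleftrightarrow> (\<forall>k. \<exists>N. \<forall>n\<ge>N. k \<le> length (ps n) \<and> (\<forall>j<k. ps n ! j = X j))"

definition cpl :: "(nat \<Rightarrow> 'e) \<Rightarrow> 'e list \<Rightarrow> nat" where
  "cpl W p = length (takeWhile id (map (\<lambda>j. p ! j = W j) [0..<length p]))"

definition attracting_fixed_word :: "'e set \<Rightarrow> ('e \<Rightarrow> 'v) \<Rightarrow> ('e \<Rightarrow> 'v) \<Rightarrow> ('e \<Rightarrow> 'e)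
     \<Rightarrow> ('e \<Rightarrow> 'e list) \<Rightarrow> 'v \<Rightarrow> (nat \<Rightarrow> 'e) \<Rightarrow> bool" where
  "attracting_fixed_word E src tgt rv bE v W \<longleftrightarrow> inf_path E src tgt rv v W \<and>
     converges_to (\<lambda>i. red rv (bstar bE (prefix i W))) W \<and>
     filterlim (\<lambda>i. int (cpl W (red rv (bstar bE (prefix i W)))) - int i) at_top sequentially"

text \<open>X = U W (boundary action of U in pi_1 on the infinite word W).\<close>
definition is_product :: "('e \<Rightarrow> 'e) \<Rightarrow> 'e list \<Rightarrow> (nat \<Rightarrow> 'e) \<Rightarrow> (nat \<Rightarrow> 'e) \<Rightarrow> bool" where
  "is_product rv U W X \<longleftrightarrow> converges_to (\<lambda>n. red rv (U @ prefix n W)) X"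

end

theory Submission
  imports "HOL-Library.Sublist" Defs
begin

text \<open>Idea: since \<open>\<beta>\<close> maps every edge outside \<open>Z\<^sub>0\<close> to a single edge outside \<open>Z\<^sub>0\<close> and \<open>Z\<^sub>0\<close> into
  itself, the edges outside \<open>Z\<^sub>0\<close> of \<open>\<beta>(p)\<close> are exactly the images of those of \<open>p\<close>, and tightening
  can only delete some of them. For an attracting fixed word \<open>W\<close> the tightened image of the prefix
  \<open>W\<^sub>i\<close> eventually begins with the longer prefix \<open>W\<^sub>i\<^sub>+\<^sub>1\<close>, so no edge is deleted and \<open>\<beta>\<close> fixes the
  sequence of edges of \<open>W\<^sub>i\<close> outside \<open>Z\<^sub>0\<close>. An edge with \<open>\<beta>(e) = e\<close> would carry interior fixed
  points, so that sequence is empty: \<open>W\<close> itself already lies in \<open>Z\<^sub>0\<close> (take \<open>U\<close> trivial).\<close>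

lemma subseq_red: "subseq (red rv p) p"
proof (induction p)
  case (Cons e p)
  then show ?case
    by (cases "red rv p") (auto dest: subseq_Cons')
qed simp

lemma reduced_Cons: "reduced rv (e # p) \<longleftrightarrow> reduced rv p \<and> (p \<noteq> [] \<longrightarrow> hd p \<noteq> rv e)"
  unfolding reduced_def
  by (cases p) (auto simp: nth_Cons hd_conv_nth split: nat.splits)

lemma red_reduced: "reduced rv p \<Longrightarrow> red rv p = p"
  by (induction p) (auto simp: reduced_Cons split: list.split)

lemma filter_bstar_outside:
  assumes "\<forall>e\<in>A. set (bE e) \<subseteq> A" and "\<forall>e\<in>set p - A. \<exists>f. f \<notin> A \<and> bE e = [f]"
  shows "filter (\<lambda>x. x \<notin> A) (bstar bE p) = map (\<lambda>x. hd (bE x)) (filter (\<lambda>x. x \<notin> A) p)"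
  using assms(2)
proof (induction p)
  case (Cons e p)
  show ?case
  proof (cases "e \<in> A")
    case True
    then have "filter (\<lambda>x. x \<notin> A) (bE e) = []"
      using assms(1) by (auto simp: filter_empty_conv)
    with Cons True show ?thesis by (simp add: bstar_def)
  next
    case False
    with Cons.prems obtain f where "f \<notin> A" "bE e = [f]" by auto
    with Cons False show ?thesis by (simp add: bstar_def)
  qed
qed (simp add: bstar_def)

lemma take_cpl: "m \<le> cpl W p \<Longrightarrow> take m p = prefix m W"
proof -
  assume m: "m \<le> cpl W p"
  let ?agree = "map (\<lambda>j. p ! j = W j) [0..<length p]"
  have len: "cpl W p \<le> length p"
    unfolding cpl_def using length_takeWhile_le[of id ?agree] by simp
  have "p ! j = W j" if "j < m" for j
  proof -
    have j: "j < length (takeWhile id ?agree)" using that m unfolding cpl_def by simp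
    then have "id (takeWhile id ?agree ! j)" using nth_mem set_takeWhileD by metis
    then have "?agree ! j" using takeWhile_nth[OF j] by simp
    then show ?thesis using that m len by simp
  qed
  then show ?thesis
    using m len by (intro nth_equalityI) (auto simp: prefix_def)
qed

lemma extending_image_fixes_outside_edges:
  fixes A :: "'e set" and p :: "'e list"
  defines "F \<equiv> filter (\<lambda>x. x \<notin> A)"
  assumes "\<forall>e\<in>A. set (bE e) \<subseteq> A" and "\<forall>e\<in>set p - A. \<exists>f. f \<notin> A \<and> bE e = [f]"
    and ext: "take (Suc (length p)) (red rv (bstar bE p)) = p @ [x]"
  shows "\<forall>e\<in>set (F p). hd (bE e) = e"
proof -
  define q where "q = red rv (bstar bE p)"
  have sub: "subseq (F q) (map (\<lambda>x. hd (bE x)) (F p))"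
    using subseq_filter[OF subseq_red] filter_bstar_outside[OF assms(2,3)]
    unfolding q_def F_def by metis
  have split: "F q = F (p @ [x]) @ F (drop (Suc (length p)) q)"
    by (metis ext q_def F_def append_take_drop_id filter_append)
  have "length (F (p @ [x])) \<le> length (F p)"
    using list_emb_length[OF sub] split by simp
  then have "x \<in> A"
    unfolding F_def by (cases "x \<in> A") auto
  then have "F q = F p @ F (drop (Suc (length p)) q)"
    using split unfolding F_def by simp
  moreover have "length (F q) \<le> length (F p)"
    using list_emb_length[OF sub] by simp
  ultimately have "F q = F p" by simp
  moreover have "F q = map (\<lambda>x. hd (bE x)) (F p)"
    using subseq_same_length[OF sub] \<open>F q = F p\<close> by simp
  ultimately show ?thesis by (metis map_eq_conv map_ident)
qed

lemma fixed_points_vertices_no_fixed_edge: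
  "fixed_points_vertices E rv bE \<Longrightarrow> e \<in> E \<Longrightarrow> bE e \<noteq> [e]"
  unfolding fixed_points_vertices_def by fastforce

lemma attracting_fixed_word_in_invariant_subgraph:
  assumes rtt: "rtt_type2 V E src tgt rv E0 bV bE"
    and W: "attracting_fixed_word E src tgt rv bE v0 W"
  shows "W n \<in> E0"
proof -
  define q where "q i = red rv (bstar bE (prefix i W))" for i
  define F where "F = filter (\<lambda>x. x \<notin> E0)"
  have inv: "\<forall>e\<in>E0. set (bE e) \<subseteq> E0" and perm: "\<forall>e\<in>E - E0. \<exists>f\<in>E - E0. bE e = [f]"
    and fpv: "fixed_points_vertices E rv bE"
    using rtt unfolding rtt_type2_def by auto
  have WE: "set (prefix i W) \<subseteq> E" for i
    using W unfolding attracting_fixed_word_def inf_path_def prefix_def by auto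
  have "\<forall>\<^sub>F i in sequentially. 1 \<le> int (cpl W (q i)) - int i"
    using W unfolding attracting_fixed_word_def filterlim_at_top q_def by blast
  then obtain N where N: "\<And>i. i \<ge> N \<Longrightarrow> Suc i \<le> cpl W (q i)"
    unfolding eventually_sequentially by fastforce
  have no_outside_edges: "F (prefix i W) = []" if "i \<ge> N" for i
  proof -
    let ?L = "F (prefix i W)"
    have outside: "\<forall>e\<in>set (prefix i W) - E0. \<exists>f. f \<notin> E0 \<and> bE e = [f]"
      using perm WE by blast
    have "take (Suc (length (prefix i W))) (q i) = prefix i W @ [W i]"
      using take_cpl[OF N[OF that]] by (simp add: prefix_def)
    then have "\<forall>e\<in>set ?L. hd (bE e) = e"
      using extending_image_fixes_outside_edges[OF inv outside] unfolding q_def F_def by blast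
    then have "\<forall>e\<in>set ?L. bE e = [e]"
      using outside unfolding F_def by force
    moreover have "set ?L \<subseteq> E" using WE unfolding F_def by auto
    ultimately show ?thesis
      using fixed_points_vertices_no_fixed_edge[OF fpv] by (metis subsetD list.set_sel(1))
  qed
  have "W n \<in> set (prefix (max N (Suc n)) W)"
    unfolding prefix_def by auto
  then show ?thesis
    using no_outside_edges[of "max N (Suc n)"] unfolding F_def by (metis empty_filter_conv max.cobounded1)
qed

lemma attracting_fixed_word_restrict:
  assumes "attracting_fixed_word E src tgt rv bE v W" and "\<And>n. W n \<in> E0"
  shows "attracting_fixed_word E0 src tgt rv bE v W"
  using assms unfolding attracting_fixed_word_def inf_path_def by auto

lemma converges_to_prefix: "converges_to (\<lambda>n. prefix n W) W"
  unfolding converges_to_def prefix_def by (intro allI exI[of _ k for k]) auto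

lemma is_product_Nil:
  assumes "inf_path E src tgt rv v W"
  shows "is_product rv [] W W"
proof -
  have "reduced rv (prefix n W)" for n
    using assms unfolding reduced_def prefix_def inf_path_def by simp
  then show ?thesis
    using converges_to_prefix unfolding is_product_def by (simp add: red_reduced)
qed

theorem lemma4p4:
  fixes V :: "'v set" and E :: "'e set" and src tgt :: "'e \<Rightarrow> 'v" and rv :: "'e \<Rightarrow> 'e"
    and E0 :: "'e set" and bV :: "'v \<Rightarrow> 'v" and bE :: "'e \<Rightarrow> 'e list"
    and v0 :: 'v and W :: "nat \<Rightarrow> 'e"
  assumes "rtt_type2 V E src tgt rv E0 bV bE"
    and "v0 \<in> V" and "bV v0 = v0"
    and "attracting_fixed_word E src tgt rv bE v0 W"
  shows "\<exists>U W'. U \<in> pi1 E src tgt rv v0 \<and> red rv (bstar bE U) = U \<and>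
           attracting_fixed_word E0 src tgt rv bE v0 W' \<and> is_product rv U W W'"
proof (intro exI conjI)
  show "[] \<in> pi1 E src tgt rv v0" unfolding pi1_def reduced_def by simp
  show "red rv (bstar bE []) = []" by (simp add: bstar_def)
  show "attracting_fixed_word E0 src tgt rv bE v0 W"
    using attracting_fixed_word_restrict attracting_fixed_word_in_invariant_subgraph assms(1,4) by metis
  show "is_product rv [] W W"
    using assms(4) unfolding attracting_fixed_word_def by (blast intro: is_product_Nil)
qed

end
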